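(* Let $\mathfrak k$ be a nonzero semisimple Hilbert–Lie algebra and $\phi$ an automorphism of $\mathfrak k$ of finite order. Then the fixed point algebra $\mathfrak k^\phi=\{x\in\mathfrak k:\phi(x)=x\}$ is nonzero.
   Context: A Hilbert–Lie algebra is a real Lie algebra with Hilbert space structure such that $\langle[x,y],z\rangle=\langle x,[y,z]\rangle$; it is semisimple if its center is trivial (equivalently it is an orthogonal sum of simple ideals). Automorphisms are isometric Lie algebra automorphisms. *)

theory Defs
  imports "HOL-Analysis.Analysis"
begin

definition lie_algebra :: "('a::real_vector \<Rightarrow> 'a \<Rightarrow> 'a) \<Rightarrow> bool" where
  "lie_algebra br \<longleftrightarrow>
     (\<forall>x. linear (br x)) \<and> (\<forall>y. linear (\<lambda>x. br x y)) \<and>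
     (\<forall>x. br x x = 0) \<and>
     (\<forall>x y z. br x (br y z) + br y (br z x) + br z (br x y) = 0)"

definition hilbert_lie_algebra :: "('a::{real_inner,complete_space} \<Rightarrow> 'a \<Rightarrow> 'a) \<Rightarrow> bool" where
  "hilbert_lie_algebra br \<longleftrightarrow> lie_algebra br \<and>
     (\<forall>x y z. inner (br x y) z = inner x (br y z))"

definition lie_center :: "('a::real_vector \<Rightarrow> 'a \<Rightarrow> 'a) \<Rightarrow> 'a set" where
  "lie_center br = {z. \<forall>x. br z x = 0}"

definition semisimple_hilbert_lie_algebra :: "('a::{real_inner,complete_space} \<Rightarrow> 'a \<Rightarrow> 'a) \<Rightarrow> bool" where
  "semisimple_hilbert_lie_algebra br \<longleftrightarrow> hilbert_lie_algebra br \<and> lie_center br = {0}"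

definition hl_automorphism :: "('a::real_normed_vector \<Rightarrow> 'a \<Rightarrow> 'a) \<Rightarrow> ('a \<Rightarrow> 'a) \<Rightarrow> bool" where
  "hl_automorphism br \<phi> \<longleftrightarrow> linear \<phi> \<and> bij \<phi> \<and>
     (\<forall>x y. \<phi> (br x y) = br (\<phi> x) (\<phi> y)) \<and> (\<forall>x. norm (\<phi> x) = norm x)"

definition finite_order :: "('a \<Rightarrow> 'a) \<Rightarrow> bool" where
  "finite_order \<phi> \<longleftrightarrow> (\<exists>n>0. (\<phi> ^^ n) = id)"

end

theory Submission
  imports Defs "HOL-Computational_Algebra.Primes"
begin

(* Suppose the automorphism \<phi> of order dividing N has no nonzero fixed point;
   we show that the bracket vanishes identically, so the whole algebra is central, which
   contradicts semisimplicity of a nonzero algebra.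

   Complexify: on k \<times> k the extension of \<phi> is diagonalisable with eigenvalues the
   N-th roots of unity \<zeta>^j, and the eigenspaces V j form a Z/N-grading of the complexified
   Lie algebra with V 0 = 0 (no fixed points).  Because the inner product is invariant,
   homogeneous elements act by normal operators, so a nilpotent ad z vanishes.  A purely
   combinatorial argument (the locale cyclic_grading) then shows that such a grading is
   abelian: if the degree u of z is a unit mod N, iterating ad z from any degree reaches
   degree -u, where [z, V(-u)] \<subseteq> V 0 = 0, hence ad z is nilpotent and zero; the general
   case reduces to this one by translating degrees and by dividing out common factors.
   Finally, every element of k is a sum of its eigencomponents (discrete Fourier
   projections), so the bracket of k vanishes. *)

section \<open>Residues mod n\<close>

lemma coprime_if_no_common_prime_int:
  fixes a b :: int
  assumes "b \<noteq> 0" "\<And>p. prime p \<Longrightarrow> p dvd b \<Longrightarrow> \<not> p dvd a"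
  shows "coprime a b"
proof (rule ccontr)
  assume "\<not> coprime a b"
  then have "\<not> is_unit (gcd a b)" by (simp add: coprime_iff_gcd_eq_1)
  moreover have "gcd a b \<noteq> 0" using assms(1) by simp
  ultimately obtain p where "prime p" "p dvd gcd a b" using prime_divisor_exists by blast
  then show False using assms(2) by auto
qed

lemma unit_translate_reaches:
  fixes n u j :: int
  assumes "n > 0" "coprime u n"
  shows "\<exists>m::nat. (j + int m * u) mod n = (- u) mod n"
proof -
  obtain a b where ab: "a * u + b * n = 1"
    using bezout_int[of u n] assms(2) by (auto simp: coprime_iff_gcd_eq_1)
  define t where "t = (- (j + u) * a) mod n"
  have t_nonneg: "int (nat t) = t" using assms(1) unfolding t_def by simp
  have "t * u = - (j + u) * (a * u) - n * ((- (j + u) * a) div n) * u"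
    unfolding t_def by (simp add: minus_div_mult_eq_mod[symmetric] algebra_simps)
  also have "a * u = 1 - b * n" using ab by simp
  finally have "j + t * u = - u + ((j + u) * b - ((- (j + u) * a) div n) * u) * n"
    by (simp add: algebra_simps)
  then have "(j + int (nat t) * u) mod n = (- u) mod n"
    by (simp only: t_nonneg mod_mult_self1)
  then show ?thesis by blast
qed

text \<open>If i, j, n have no common prime factor, some translate j + m i with m \<ge> 1 is a
  unit mod n: take m to be the product of the primes of n not dividing j.\<close>
lemma coprime_translate_exists:
  fixes n i j :: int
  assumes "n > 0" "gcd (gcd i j) n = 1"
  shows "\<exists>m::nat. m \<ge> 1 \<and> coprime (j + int m * i) n"
proof -
  define S where "S = {p \<in> prime_factors n. \<not> p dvd j}"
  define M where "M = \<Prod>S"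
  have finS: "finite S" unfolding S_def by simp
  have S_primes: "\<And>p. p \<in> S \<Longrightarrow> prime p \<and> p dvd n \<and> \<not> p dvd j" unfolding S_def
    by (auto simp: in_prime_factors_iff)
  have M_pos: "M > 0" unfolding M_def using S_primes
    by (intro prod_pos) (auto intro: prime_gt_0_int)
  have "coprime (j + M * i) n"
  proof (rule coprime_if_no_common_prime_int)
    show "n \<noteq> 0" using assms by simp
    fix q :: int assume q: "prime q" "q dvd n"
    show "\<not> q dvd (j + M * i)"
    proof (cases "q dvd j")
      case True
      have "\<not> q dvd i"
      proof
        assume "q dvd i"
        then have "q dvd gcd (gcd i j) n" using True q by simp
        then show False using assms(2) q(1) by (simp add: not_prime_unit)
      qed
      moreover have "\<not> q dvd M"
      proof
        assume "q dvd M"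
        then obtain p where p: "p \<in> S" "q dvd p"
          unfolding M_def using prime_dvd_prod_iff[OF finS q(1)] by auto
        then have "q = p" using S_primes[OF p(1)] q(1)
          by (metis primes_dvd_imp_eq)
        then show False using S_primes[OF p(1)] True by simp
      qed
      ultimately have "\<not> q dvd M * i" using q(1) by (simp add: prime_dvd_mult_iff)
      then show ?thesis using True by (simp add: dvd_add_right_iff)
    next
      case False
      then have "q \<in> S" unfolding S_def using q assms(1) by (simp add: in_prime_factors_iff)
      then have "q dvd M * i" unfolding M_def using finS dvd_prodI[of S q id] by simp
      then show ?thesis using False by (simp add: dvd_add_left_iff)
    qed
  qed
  moreover have "int (nat M) = M" "nat M \<ge> 1" using M_pos by simp_all
  ultimately show ?thesis by metis
qed

lemma gcd3_div_gcd3: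
  fixes i j n :: int
  assumes "n > 0"
  defines "d \<equiv> gcd (gcd i j) n"
  shows "gcd (gcd (i div d) (j div d)) (n div d) = 1"
proof -
  have d_pos: "d > 0" using assms(1) unfolding d_def by simp
  have "d dvd i" "d dvd j" "d dvd n" unfolding d_def
    by (meson dvd_trans gcd_dvd1 gcd_dvd2)+
  then have "i = d * (i div d)" "j = d * (j div d)" "n = d * (n div d)" by simp_all
  then have "d * gcd (gcd (i div d) (j div d)) (n div d) = gcd (gcd i j) n"
    using d_pos by (metis abs_of_pos gcd_mult_distrib_int)
  then show ?thesis using d_pos assms(1) unfolding d_def by simp
qed

section \<open>Cyclic gradings with positivity are abelian\<close>

text \<open>An abstract Z/n-graded algebra (degree pieces V j, V 0 trivial) with a
  degree-reversing conjugation, satisfying the two positivity properties that a compact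
  (Hilbert) Lie algebra enjoys: homogeneous elements with ad-square zero have ad zero,
  and [v*, [z, v]] = 0 forces [z, v] = 0.\<close>
locale cyclic_grading =
  fixes n :: int and bc :: "'b::zero \<Rightarrow> 'b \<Rightarrow> 'b" and cj :: "'b \<Rightarrow> 'b"
    and V :: "int \<Rightarrow> 'b set"
  assumes modulus_pos: "n > 0"
    and degree_mod: "\<And>j. V (j mod n) = V j"
    and degree_zero: "\<And>x. x \<in> V 0 \<Longrightarrow> x = 0"
    and bracket_degree: "\<And>i j x y. x \<in> V i \<Longrightarrow> y \<in> V j \<Longrightarrow> bc x y \<in> V (i + j)"
    and ad_square_zero: "\<And>i x v. x \<in> V i \<Longrightarrow> bc x (bc x v) = 0 \<Longrightarrow> bc x v = 0"
    and conj_annihilates: "\<And>z v. bc (cj v) (bc z v) = 0 \<Longrightarrow> bc z v = 0"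
    and conj_degree: "\<And>i x. x \<in> V i \<Longrightarrow> cj x \<in> V (- i)"
    and bracket_zero_sym: "\<And>x y. bc x y = 0 \<Longrightarrow> bc y x = 0"
begin

lemma degree_cong: "a mod n = b mod n \<Longrightarrow> V a = V b"
  by (metis degree_mod)

lemma ad_power_degree: "z \<in> V i \<Longrightarrow> v \<in> V j \<Longrightarrow> (bc z ^^ m) v \<in> V (j + int m * i)"
proof (induction m)
  case 0 then show ?case by simp
next
  case (Suc m)
  then have "bc z ((bc z ^^ m) v) \<in> V (i + (j + int m * i))" using bracket_degree by blast
  then show ?case by (simp add: algebra_simps)
qed

lemma ad_nilpotent_zero: "z \<in> V i \<Longrightarrow> (bc z ^^ Suc m) v = 0 \<Longrightarrow> bc z v = 0"
proof (induction m)
  case 0 then show ?case by simp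
next
  case (Suc m)
  then have "bc z (bc z ((bc z ^^ m) v)) = 0" by simp
  then have "bc z ((bc z ^^ m) v) = 0" using ad_square_zero Suc.prems(1) by blast
  then show ?case using Suc by simp
qed

lemma unit_degree_central:
  assumes "coprime u n" "z \<in> V u" "y \<in> V j"
  shows "bc z y = 0"
proof -
  obtain m :: nat where m: "(j + int m * u) mod n = (- u) mod n"
    using unit_translate_reaches[OF modulus_pos assms(1)] by blast
  have "(bc z ^^ m) y \<in> V (- u)" using ad_power_degree[OF assms(2,3), of m] degree_cong[OF m] by simp
  then have "bc z ((bc z ^^ m) y) \<in> V 0" using bracket_degree[OF assms(2)] by fastforce
  then have "(bc z ^^ Suc m) y = 0" using degree_zero by simp
  then show ?thesis using ad_nilpotent_zero[OF assms(2)] by blast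
qed

text \<open>If the degrees i, j and n have no common factor, V i and V j commute: some
  iterate (ad z)^(m-1) v has a bracket with z of unit degree, which is central and
  hence killed by the conjugate of that iterate.\<close>
lemma coprime_degrees_commute:
  assumes "gcd (gcd i j) n = 1" "z \<in> V i" "v \<in> V j"
  shows "bc z v = 0"
proof -
  obtain m :: nat where m: "m \<ge> 1" "coprime (j + int m * i) n"
    using coprime_translate_exists[OF modulus_pos assms(1)] by blast
  then obtain k where k: "m = Suc k" by (cases m) auto
  define w where "w = (bc z ^^ k) v"
  have "cj w \<in> V (- (j + int k * i))"
    unfolding w_def using conj_degree ad_power_degree[OF assms(2,3)] by blast
  moreover have "bc z w \<in> V (j + int m * i)"
    unfolding w_def using ad_power_degree[OF assms(2,3), of m] k by simp
  ultimately have "bc (bc z w) (cj w) = 0" using unit_degree_central[OF m(2)] by blast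
  then have "bc z w = 0" using bracket_zero_sym conj_annihilates by blast
  then have "(bc z ^^ Suc k) v = 0" unfolding w_def by simp
  then show ?thesis using ad_nilpotent_zero[OF assms(2)] by blast
qed

lemma rescaled_grading:
  assumes "d > 0" "d dvd n"
  shows "cyclic_grading (n div d) bc cj (\<lambda>k. V (d * k))"
proof
  show "n div d > 0" using assms modulus_pos by (simp add: pos_imp_zdiv_pos_iff zdvd_imp_le)
next
  fix k
  have "d * k = d * (k mod (n div d)) + n * (k div (n div d))"
    using assms(2) by (metis dvd_mult_div_cancel distrib_left mult.assoc mod_mult_div_eq)
  then show "V (d * (k mod (n div d))) = V (d * k)" by (metis degree_cong mod_mult_self2)
qed (auto simp: distrib_left intro: degree_zero bracket_degree ad_square_zero
    conj_annihilates bracket_zero_sym dest: conj_degree)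

theorem graded_abelian:
  assumes "x \<in> V i" "y \<in> V j"
  shows "bc x y = 0"
proof -
  define d where "d = gcd (gcd i j) n"
  have d_pos: "d > 0" using modulus_pos unfolding d_def by simp
  interpret rescaled: cyclic_grading "n div d" bc cj "\<lambda>k. V (d * k)"
    using d_pos by (rule rescaled_grading) (simp add: d_def)
  have "d dvd i" "d dvd j" unfolding d_def by (meson dvd_trans gcd_dvd1 gcd_dvd2)+
  then have "i = d * (i div d)" "j = d * (j div d)" by simp_all
  then have x: "x \<in> V (d * (i div d))" and y: "y \<in> V (d * (j div d))" using assms by simp_all
  show ?thesis
    by (rule rescaled.coprime_degrees_commute[OF _ x y])
      (simp add: d_def gcd3_div_gcd3[OF modulus_pos])
qed

end

section \<open>Roots of unity\<close>

definition root_unity :: "int \<Rightarrow> int \<Rightarrow> complex" where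
  "root_unity n k = cis (2 * pi * of_int k / of_int n)"

lemma root_unity_add: "n \<noteq> 0 \<Longrightarrow> root_unity n a * root_unity n b = root_unity n (a + b)"
  unfolding root_unity_def cis_mult by (simp add: add_divide_distrib algebra_simps)

lemma root_unity_0 [simp]: "root_unity n 0 = 1"
  unfolding root_unity_def by simp

lemma root_unity_cnj: "cnj (root_unity n a) = root_unity n (- a)"
  unfolding root_unity_def cis_cnj by simp

lemma root_unity_multiple: "n \<noteq> 0 \<Longrightarrow> root_unity n (n * t) = 1"
proof -
  assume "n \<noteq> 0"
  then have "2 * pi * of_int (n * t) / of_int n = 2 * pi * of_int t" by simp
  then show ?thesis unfolding root_unity_def using cis_multiple_2pi[of "of_int t"] by simp
qed

lemma root_unity_period: "n \<noteq> 0 \<Longrightarrow> root_unity n (a + n * t) = root_unity n a"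
  using root_unity_add[of n a "n * t"] root_unity_multiple[of n t] by simp

lemma root_unity_mod: "n \<noteq> 0 \<Longrightarrow> root_unity n (a mod n) = root_unity n a"
  using root_unity_period[of n "a mod n" "a div n"] by simp

lemma root_unity_pow: "n \<noteq> 0 \<Longrightarrow> root_unity n a ^ k = root_unity n (int k * a)"
  by (induction k) (simp_all add: root_unity_add algebra_simps)

lemma root_unity_ne_1:
  assumes "0 < l" "l < N"
  shows "root_unity (int N) (- int l) \<noteq> 1"
proof
  assume "root_unity (int N) (- int l) = 1"
  then have "root_unity (int N) (int l) = 1"
    by (metis root_unity_cnj complex_cnj_one complex_cnj_cnj)
  moreover have "root_unity (int N) (int l) =
      exp (2 * complex_of_real pi * \<i> * complex_of_nat l / complex_of_nat N)"
    unfolding root_unity_def cis_conv_exp by (simp add: algebra_simps)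
  ultimately have "N dvd l" using complex_root_unity_eq_1[of N l] assms by simp
  then show False using assms by (simp add: nat_dvd_not_less)
qed

lemma root_unity_character_sum:
  assumes "l < N"
  shows "(\<Sum>k<N. root_unity (int N) (- (int k * int l))) = (if l = 0 then of_nat N else 0)"
proof (cases "l = 0")
  case False
  let ?\<zeta> = "root_unity (int N) (- int l)"
  have N_ne: "int N \<noteq> 0" using assms by simp
  have "(\<Sum>k<N. root_unity (int N) (- (int k * int l))) = (\<Sum>k<N. ?\<zeta> ^ k)"
    using root_unity_pow[OF N_ne] by simp
  moreover have "?\<zeta> ^ N = 1"
    using root_unity_pow[OF N_ne] root_unity_multiple[OF N_ne, of "- int l"]
    by (simp add: algebra_simps)
  ultimately show ?thesis
    using sum_gp_strict[of ?\<zeta> N] root_unity_ne_1[of l N] False assms by simp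
qed simp

lemma sum_lessThan_shift_periodic:
  fixes g :: "nat \<Rightarrow> 'b::comm_monoid_add"
  assumes "g N = g 0"
  shows "(\<Sum>l<N. g (Suc l)) = (\<Sum>l<N. g l)"
proof (cases N)
  case (Suc M)
  have "(\<Sum>l<N. g (Suc l)) = (\<Sum>l<M. g (Suc l)) + g N" using Suc by simp
  also have "\<dots> = g 0 + (\<Sum>l<M. g (Suc l))" using assms by (simp add: add.commute)
  also have "\<dots> = (\<Sum>l<Suc M. g l)" by (simp only: sum.lessThan_Suc_shift)
  finally show ?thesis using Suc by simp
qed simp

section \<open>Complexification\<close>

text \<open>The complexification of a real vector space 'a is modelled as 'a \<times> 'a, the pair
  (x, y) standing for x + i y; complex scalars, conjugation, the complexified bracket and
  the complex-linear extension of a real map are defined componentwise.\<close>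

definition cscale :: "complex \<Rightarrow> 'a::real_vector \<times> 'a \<Rightarrow> 'a \<times> 'a" where
  "cscale c x = (Re c *\<^sub>R fst x - Im c *\<^sub>R snd x, Re c *\<^sub>R snd x + Im c *\<^sub>R fst x)"

definition cconj :: "'a::real_vector \<times> 'a \<Rightarrow> 'a \<times> 'a" where
  "cconj x = (fst x, - snd x)"

definition cbracket :: "('a::real_vector \<Rightarrow> 'a \<Rightarrow> 'a) \<Rightarrow> 'a \<times> 'a \<Rightarrow> 'a \<times> 'a \<Rightarrow> 'a \<times> 'a" where
  "cbracket br x y =
     (br (fst x) (fst y) - br (snd x) (snd y), br (fst x) (snd y) + br (snd x) (fst y))"

definition cmap :: "('a \<Rightarrow> 'a) \<Rightarrow> 'a \<times> 'a \<Rightarrow> 'a \<times> 'a" where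
  "cmap f x = (f (fst x), f (snd x))"

lemma cscale_1 [simp]: "cscale 1 x = x"
  unfolding cscale_def by simp

lemma cscale_0 [simp]: "cscale 0 x = 0" "cscale c 0 = 0"
  unfolding cscale_def by (simp_all add: zero_prod_def)

lemma cscale_mult: "cscale a (cscale b x) = cscale (a * b) x"
  unfolding cscale_def by (simp add: algebra_simps)

lemma cscale_add: "cscale (a + b) x = cscale a x + cscale b x"
  "cscale c (x + y) = cscale c x + cscale c y"
  unfolding cscale_def by (simp_all add: algebra_simps)

lemma cscale_sum_left: "cscale (sum f A) x = (\<Sum>a\<in>A. cscale (f a) x)"
  by (induction A rule: infinite_finite_induct) (simp_all add: cscale_add)

lemma cscale_sum_right: "cscale c (sum f A) = (\<Sum>a\<in>A. cscale c (f a))"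
  by (induction A rule: infinite_finite_induct) (simp_all add: cscale_add)

lemma cscale_of_nat: "cscale (of_nat m) x = of_nat m *\<^sub>R x"
  unfolding cscale_def by (simp add: prod_eq_iff)

lemma cconj_cscale: "cconj (cscale c x) = cscale (cnj c) (cconj x)"
  unfolding cscale_def cconj_def by (simp add: algebra_simps)

text \<open>Properties of the complexified bracket of an invariant Lie algebra (ad x is
  skew-adjoint).  The inner product on 'a \<times> 'a is the real part of the Hermitian one.\<close>
locale invariant_lie =
  fixes br :: "'a::real_inner \<Rightarrow> 'a \<Rightarrow> 'a"
  assumes lie: "lie_algebra br"
    and invariant: "\<And>x y z. inner (br x y) z = inner x (br y z)"
begin

lemma linear_right: "linear (br x)" and linear_left: "linear (\<lambda>x. br x y)"
  using lie unfolding lie_algebra_def by blast+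

lemmas br_linear =
  linear_add[OF linear_left] linear_add[OF linear_right]
  linear_diff[OF linear_left] linear_diff[OF linear_right]
  linear_neg[OF linear_left] linear_neg[OF linear_right]
  linear_scale[OF linear_left] linear_scale[OF linear_right]
  linear_0[OF linear_left] linear_0[OF linear_right]

lemma br_antisym: "br x y = - br y x"
proof -
  have "br (x + y) (x + y) = 0" "br x x = 0" "br y y = 0"
    using lie unfolding lie_algebra_def by blast+
  then show ?thesis by (simp add: br_linear eq_neg_iff_add_eq_0 add.commute)
qed

lemma br_derivation: "br a (br b c) = br (br a b) c + br b (br a c)"
proof -
  have "br a (br b c) + br b (br c a) + br c (br a b) = 0"
    using lie unfolding lie_algebra_def by blast
  then show ?thesis
    using br_antisym[of c a] br_antisym[of c "br a b"] by (simp add: br_linear algebra_simps)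
qed

lemma ad_skew: "inner (br z x) y = - inner x (br z y)"
proof -
  have "inner (br z x) y = - inner (br x z) y" using br_antisym[of z x] by simp
  then show ?thesis by (simp add: invariant)
qed

lemma cbracket_cscale: "cbracket br (cscale c x) y = cscale c (cbracket br x y)"
  "cbracket br x (cscale c y) = cscale c (cbracket br x y)"
  unfolding cbracket_def cscale_def by (simp_all add: br_linear algebra_simps)

lemma cbracket_scaleR: "cbracket br (r *\<^sub>R x) y = r *\<^sub>R cbracket br x y"
  "cbracket br y (r *\<^sub>R x) = r *\<^sub>R cbracket br y x"
  unfolding cbracket_def by (simp_all add: br_linear algebra_simps)

lemma cbracket_zero [simp]: "cbracket br 0 y = 0" "cbracket br y 0 = 0"
  unfolding cbracket_def by (simp_all add: br_linear zero_prod_def)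

lemma cbracket_add: "cbracket br (x + x') y = cbracket br x y + cbracket br x' y"
  "cbracket br y (x + x') = cbracket br y x + cbracket br y x'"
  unfolding cbracket_def by (simp_all add: br_linear algebra_simps)

lemma cbracket_sum: "cbracket br (sum f A) y = (\<Sum>a\<in>A. cbracket br (f a) y)"
  "cbracket br y (sum f A) = (\<Sum>a\<in>A. cbracket br y (f a))"
  by (induction A rule: infinite_finite_induct) (simp_all add: cbracket_add)

lemma cbracket_antisym: "cbracket br x y = - cbracket br y x"
  unfolding cbracket_def using br_antisym[of "fst y" "fst x"] br_antisym[of "snd y" "snd x"]
    br_antisym[of "fst y" "snd x"] br_antisym[of "snd y" "fst x"]
  by (simp add: prod_eq_iff)

lemma cbracket_skew: "inner (cbracket br z x) y = - inner x (cbracket br (cconj z) y)"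
  unfolding cbracket_def cconj_def
  by (simp add: inner_prod_def br_linear inner_diff_left inner_add_left inner_diff_right
      inner_add_right ad_skew)

lemma cbracket_derivation:
  "cbracket br z (cbracket br w v) = cbracket br (cbracket br z w) v + cbracket br w (cbracket br z v)"
proof -
  obtain z1 z2 where z: "z = (z1, z2)" by fastforce
  obtain w1 w2 where w: "w = (w1, w2)" by fastforce
  obtain v1 v2 where v: "v = (v1, v2)" by fastforce
  note derivations = br_derivation[of z1 w1 v1] br_derivation[of z1 w2 v2]
    br_derivation[of z2 w1 v2] br_derivation[of z2 w2 v1] br_derivation[of z1 w1 v2]
    br_derivation[of z1 w2 v1] br_derivation[of z2 w1 v1] br_derivation[of z2 w2 v2]
  show ?thesis unfolding z w v cbracket_def prod_eq_iff fst_conv snd_conv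
    by (simp only: br_linear derivations) (simp add: algebra_simps)
qed

text \<open>If ad z commutes with its adjoint (i.e. [z, z*] = 0) and (ad z)^2 v = 0, then
  ad z v = 0: a normal operator with square zero on v kills v.\<close>
lemma normal_ad_square_zero:
  assumes normal: "cbracket br z (cconj z) = 0" and sq: "cbracket br z (cbracket br z v) = 0"
  shows "cbracket br z v = 0"
proof -
  define u where "u = cbracket br z v"
  have "cbracket br (cconj z) z = 0" using normal cbracket_antisym[of "cconj z" z] by simp
  then have commute: "cbracket br (cconj z) (cbracket br z u) = cbracket br z (cbracket br (cconj z) u)"
    using cbracket_derivation[of "cconj z" z u] by simp
  have "inner (cbracket br (cconj z) u) (cbracket br (cconj z) u)
      = - inner u (cbracket br z (cbracket br (cconj z) u))"
    using cbracket_skew[of "cconj z" u] by (simp add: cconj_def)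
  also have "\<dots> = 0" using commute sq unfolding u_def by simp
  finally have "cbracket br (cconj z) u = 0" by simp
  then have "inner u u = 0" using cbracket_skew[of z v u] unfolding u_def by simp
  then show ?thesis unfolding u_def by simp
qed

text \<open>[v*, [z, v]] = 0 forces [z, v] = 0, since |[z,v]|^2 = <z, [v*, [z, v]]>.\<close>
lemma conj_bracket_zero:
  assumes "cbracket br (cconj v) (cbracket br z v) = 0"
  shows "cbracket br z v = 0"
proof -
  define w where "w = cbracket br z v"
  have "inner w w = - inner (cbracket br v z) w" unfolding w_def using cbracket_antisym[of z v] by simp
  also have "\<dots> = inner z (cbracket br (cconj v) w)" using cbracket_skew[of v z w] by simp
  also have "\<dots> = 0" using assms unfolding w_def by simp
  finally show ?thesis unfolding w_def by simp
qed

end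

section \<open>The eigenspace grading of a fixed-point-free automorphism\<close>

locale fixed_point_free_automorphism = invariant_lie br
  for br :: "'a::real_inner \<Rightarrow> 'a \<Rightarrow> 'a" +
  fixes \<phi> :: "'a \<Rightarrow> 'a" and N :: nat
  assumes linear_phi: "linear \<phi>"
    and phi_bracket: "\<And>x y. \<phi> (br x y) = br (\<phi> x) (\<phi> y)"
    and order_pos: "N > 0" and order: "\<phi> ^^ N = id"
    and fixed_point_free: "\<And>x. \<phi> x = x \<Longrightarrow> x = 0"
begin

definition eigenspace :: "int \<Rightarrow> ('a \<times> 'a) set" where
  "eigenspace k = {x. cmap \<phi> x = cscale (root_unity (int N) k) x}"

lemma N_ne_0: "int N \<noteq> 0"
  using order_pos by simp

lemma cmap_linear: "cmap \<phi> (cscale c x) = cscale c (cmap \<phi> x)"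
  "cmap \<phi> (x + y) = cmap \<phi> x + cmap \<phi> y" "cmap \<phi> 0 = 0"
  unfolding cmap_def cscale_def
  by (simp_all add: linear_add[OF linear_phi] linear_diff[OF linear_phi]
      linear_scale[OF linear_phi] linear_0[OF linear_phi] zero_prod_def)

lemma cmap_sum: "cmap \<phi> (sum f A) = (\<Sum>a\<in>A. cmap \<phi> (f a))"
  by (induction A rule: infinite_finite_induct) (simp_all add: cmap_linear)

lemma cmap_cbracket: "cmap \<phi> (cbracket br x y) = cbracket br (cmap \<phi> x) (cmap \<phi> y)"
  unfolding cmap_def cbracket_def
  by (simp add: phi_bracket linear_add[OF linear_phi] linear_diff[OF linear_phi])

lemma cmap_cconj: "cmap \<phi> (cconj x) = cconj (cmap \<phi> x)"
  unfolding cmap_def cconj_def by (simp add: linear_neg[OF linear_phi])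

lemma cmap_order: "(cmap \<phi> ^^ N) x = x"
proof -
  have "(cmap \<phi> ^^ l) x = ((\<phi> ^^ l) (fst x), (\<phi> ^^ l) (snd x))" for l
    by (induction l) (simp_all add: cmap_def)
  then show ?thesis using order by simp
qed

text \<open>The eigenspaces form a cyclic grading: no fixed points means eigenspace 0 is
  trivial, the bracket adds and conjugation negates degrees, and by normality of
  homogeneous elements the positivity axioms hold.\<close>
lemma eigenspace_zero: "x \<in> eigenspace 0 \<Longrightarrow> x = 0"
  unfolding eigenspace_def by (simp add: cmap_def prod_eq_iff fixed_point_free)

lemma eigenspace_bracket:
  "x \<in> eigenspace i \<Longrightarrow> y \<in> eigenspace j \<Longrightarrow> cbracket br x y \<in> eigenspace (i + j)"
  unfolding eigenspace_def
  by (simp add: cmap_cbracket cbracket_cscale cscale_mult root_unity_add[OF N_ne_0] add.commute)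

lemma eigenspace_cconj: "x \<in> eigenspace i \<Longrightarrow> cconj x \<in> eigenspace (- i)"
  unfolding eigenspace_def by (simp add: cmap_cconj cconj_cscale root_unity_cnj)

lemma eigenspace_grading: "cyclic_grading (int N) (cbracket br) cconj eigenspace"
proof
  show "int N > 0" using order_pos by simp
next
  fix j show "eigenspace (j mod int N) = eigenspace j"
    unfolding eigenspace_def using root_unity_mod[OF N_ne_0] by simp
next
  fix i x v assume x: "x \<in> eigenspace i" and sq: "cbracket br x (cbracket br x v) = 0"
  have "cbracket br x (cconj x) \<in> eigenspace 0"
    using eigenspace_bracket[OF x eigenspace_cconj[OF x]] by simp
  then show "cbracket br x v = 0"
    using normal_ad_square_zero[OF _ sq] eigenspace_zero by blast
next
  fix x y assume "cbracket br x y = 0" then show "cbracket br y x = 0"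
    using cbracket_antisym[of y x] by simp
qed (auto intro: eigenspace_zero eigenspace_bracket conj_bracket_zero eigenspace_cconj)

text \<open>The discrete Fourier projection onto the k-th eigenspace (times N).\<close>
definition fourier :: "nat \<Rightarrow> 'a \<times> 'a \<Rightarrow> 'a \<times> 'a" where
  "fourier k w = (\<Sum>l<N. cscale (root_unity (int N) (- (int k * int l))) ((cmap \<phi> ^^ l) w))"

lemma fourier_eigenspace: "fourier k w \<in> eigenspace (int k)"
proof -
  let ?\<zeta> = "root_unity (int N)"
  define g where "g l = cscale (?\<zeta> (int k - int k * int l)) ((cmap \<phi> ^^ l) w)" for l
  have "?\<zeta> (int k - int k * int N) = ?\<zeta> (int k)"
    using root_unity_period[OF N_ne_0, of "int k" "- int k"] by (simp add: algebra_simps)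
  then have "g N = g 0" unfolding g_def by (simp add: cmap_order)
  have "cmap \<phi> (fourier k w) = (\<Sum>l<N. g (Suc l))"
    unfolding fourier_def g_def by (simp add: cmap_sum cmap_linear algebra_simps)
  also have "\<dots> = (\<Sum>l<N. g l)" by (rule sum_lessThan_shift_periodic) fact
  also have "\<dots> = cscale (?\<zeta> (int k)) (fourier k w)"
    unfolding fourier_def g_def
    by (simp add: cscale_sum_right cscale_mult root_unity_add[OF N_ne_0])
  finally show ?thesis unfolding eigenspace_def by simp
qed

lemma fourier_sum: "(\<Sum>k<N. fourier k w) = of_nat N *\<^sub>R w"
proof -
  have "(\<Sum>k<N. fourier k w) =
      (\<Sum>l<N. cscale (\<Sum>k<N. root_unity (int N) (- (int k * int l))) ((cmap \<phi> ^^ l) w))"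
    unfolding fourier_def by (subst sum.swap) (simp add: cscale_sum_left)
  also have "\<dots> = (\<Sum>l<N. if l = 0 then cscale (of_nat N) w else 0)"
    by (rule sum.cong) (simp_all add: root_unity_character_sum)
  finally show ?thesis using order_pos by (simp add: cscale_of_nat)
qed

text \<open>Decomposing x and y into eigencomponents, all of which commute, shows that the
  Lie algebra is abelian.\<close>
theorem bracket_vanishes: "br x y = 0"
proof -
  interpret grading: cyclic_grading "int N" "cbracket br" cconj eigenspace
    by (rule eigenspace_grading)
  define X Y :: "'a \<times> 'a" where "X = (x, 0)" and "Y = (y, 0)"
  have "(of_nat N * of_nat N) *\<^sub>R cbracket br X Y
      = cbracket br (\<Sum>k<N. fourier k X) (\<Sum>l<N. fourier l Y)"
    by (simp add: fourier_sum cbracket_scaleR)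
  also have "\<dots> = (\<Sum>l<N. \<Sum>k<N. cbracket br (fourier k X) (fourier l Y))"
    by (simp add: cbracket_sum)
  also have "\<dots> = 0"
    using grading.graded_abelian[OF fourier_eigenspace fourier_eigenspace] by simp
  finally have "cbracket br X Y = 0" using order_pos by simp
  then show ?thesis unfolding X_def Y_def cbracket_def by (simp add: br_linear prod_eq_iff)
qed

end

theorem lemmaD1:
  fixes br :: "'a::{real_inner,complete_space} \<Rightarrow> 'a \<Rightarrow> 'a"
    and \<phi> :: "'a \<Rightarrow> 'a"
  assumes "semisimple_hilbert_lie_algebra br"
    and "\<exists>x::'a. x \<noteq> 0"
    and "hl_automorphism br \<phi>"
    and "finite_order \<phi>"
  shows "{x. \<phi> x = x} \<noteq> {0}"
proof
  assume no_fixed_points: "{x. \<phi> x = x} = {0}"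
  obtain N where N: "N > 0" "\<phi> ^^ N = id" using assms(4) unfolding finite_order_def by blast
  have "fixed_point_free_automorphism br \<phi> N"
    using assms(1,3) N no_fixed_points
    unfolding fixed_point_free_automorphism_def fixed_point_free_automorphism_axioms_def
      invariant_lie_def semisimple_hilbert_lie_algebra_def hilbert_lie_algebra_def
      hl_automorphism_def
    by blast
  then have "lie_center br = UNIV"
    unfolding lie_center_def using fixed_point_free_automorphism.bracket_vanishes by blast
  then show False
    using assms(1,2) unfolding semisimple_hilbert_lie_algebra_def by auto
qed

end
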